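(* Let $d\ge1$. (i) For $\lceil (d+1)/2\rceil\le j\le d$: $A(d+1,j,1)\le A(d+1,j,2)\le\dots\le A(d+1,j,d+1)$. (ii) For $0\le j\le\lfloor (d-1)/2\rfloor$: $A(d+1,j,1)\ge A(d+1,j,2)\ge\dots\ge A(d+1,j,d+1)$. (iii) If $d$ is even: $A(d+1,\tfrac d2,1)\le A(d+1,\tfrac d2,2)\le\dots\le A(d+1,\tfrac d2,\tfrac d2+1)\ge A(d+1,\tfrac d2,\tfrac d2+2)\ge\dots\ge A(d+1,\tfrac d2,d+1)$. (iv) For $0\le j\le d-1$: $A(d+1,j,1)=A(d+1,j+1,d+1)$.
   Context: $S_d$ is the symmetric group on $[d]=\{1,\dots,d\}$. For $\sigma\in S_d$, its descent set is $D(\sigma)=\{i\in[d-1]:\sigma(i)>\sigma(i+1)\}$ and $\mathrm{des}(\sigma)=\#D(\sigma)$. For $0\le i\le d-1$ and $1\le j\le d$, $A(d,i,j)=\#\{\sigma\in S_d:\mathrm{des}(\sigma)=i,\ \sigma(1)=j\}$. *)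

theory Defs
  imports "HOL-Combinatorics.Permutations"
begin

definition descents :: "nat \<Rightarrow> (nat \<Rightarrow> nat) \<Rightarrow> nat set" where
  "descents d \<sigma> = {i \<in> {1..d - 1}. \<sigma> i > \<sigma> (Suc i)}"

definition des :: "nat \<Rightarrow> (nat \<Rightarrow> nat) \<Rightarrow> nat" where
  "des d \<sigma> = card (descents d \<sigma>)"

definition A :: "nat \<Rightarrow> nat \<Rightarrow> nat \<Rightarrow> nat" where
  "A d i j = card {\<sigma>. \<sigma> permutes {1..d} \<and> des d \<sigma> = i \<and> \<sigma> 1 = j}"

end

theory Submission
  imports Defs
begin

(* Deleting the first letter k of a permutation of {1..n+1} and standardizing the remaining
   values gives a bijection onto the permutations tau of {1..n}; position 1 becomes a descent
   exactly when tau 1 < k.  This yields the recurrence (A_rec)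
     A (n+1) m k = sum_{k' < k} A n (m-1) k' + sum_{k' >= k} A n m k',
   hence the difference formula (A_step)
     A (n+1) m (k+1) - A (n+1) m k = A n (m-1) k - A n m k,
   and the case k = 1, k = n+1 gives part (iv).  Complementing values sigma i |-> n+1 - sigma i
   gives the symmetry A n m k = A n (n-1-m) (n+1-k) (A_complement).

   By the difference formula, monotonicity of A (n+1) m in the first letter is the same as
   comparing the neighbouring descent rows m-1 and m of A n.  We prove by induction on n that
   A n (m+1) k <= A n m k whenever 2m >= n-1, together with a companion inequality for the
   middle row when n is even (descent_rows_decreasing). *)

lemma sum_prefix_reflect:
  fixes f :: "nat \<Rightarrow> nat"
  assumes "1 \<le> k" "k \<le> d + 1"
  shows "(\<Sum>k'\<in>{1..<k}. f (Suc d - k')) = (\<Sum>j\<in>{Suc (Suc d) - k..d}. f j)"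
  by (rule sum.reindex_bij_witness[where i="\<lambda>j. Suc d - j" and j="\<lambda>j. Suc d - j"])
    (use assms in auto)

lemma sum_split_at:
  fixes f :: "nat \<Rightarrow> nat"
  assumes "l \<le> k" "k \<le> d + 1"
  shows "(\<Sum>i\<in>{l..d}. f i) = (\<Sum>i\<in>{l..<k}. f i) + (\<Sum>i\<in>{k..d}. f i)"
proof -
  have split: "{l..d} = {l..<k} \<union> {k..d}" "{l..<k} \<inter> {k..d} = {}" using assms by auto
  show ?thesis unfolding split(1) by (rule sum.union_disjoint) (use split(2) in auto)
qed

section \<open>Inserting and deleting a first letter\<close>

definition shift_up :: "nat \<Rightarrow> nat \<Rightarrow> nat" where
  "shift_up k v = (if v < k then v else v + 1)"

definition shift_down :: "nat \<Rightarrow> nat \<Rightarrow> nat" where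
  "shift_down k v = (if v < k then v else v - 1)"

text \<open>\<open>prepend n k \<tau>\<close> is the permutation of {1..n+1} with first letter k whose remaining letters
  are order-isomorphic to \<open>\<tau>\<close>; \<open>remove_first n k \<sigma>\<close> undoes this.\<close>

definition prepend :: "nat \<Rightarrow> nat \<Rightarrow> (nat \<Rightarrow> nat) \<Rightarrow> nat \<Rightarrow> nat" where
  "prepend n k \<tau> = (\<lambda>i. if i = 1 then k else if 2 \<le> i \<and> i \<le> n + 1 then shift_up k (\<tau> (i - 1)) else i)"

definition remove_first :: "nat \<Rightarrow> nat \<Rightarrow> (nat \<Rightarrow> nat) \<Rightarrow> nat \<Rightarrow> nat" where
  "remove_first n k \<sigma> = (\<lambda>i. if 1 \<le> i \<and> i \<le> n then shift_down k (\<sigma> (Suc i)) else i)"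

lemma prepend_permutes:
  assumes \<tau>: "\<tau> permutes {1..n}" and k: "1 \<le> k" "k \<le> n + 1"
  shows "prepend n k \<tau> permutes {1..n+1}"
proof (rule inj_imp_permutes)
  have im: "i \<in> {1..n} \<Longrightarrow> \<tau> i \<in> {1..n}" for i using permutes_in_image[OF \<tau>] by blast
  have inj: "inj_on \<tau> {1..n}" using \<tau> permutes_inj_on by blast
  have val: "prepend n k \<tau> i = shift_up k (\<tau> (i - 1))" if "i \<in> {2..n+1}" for i
    using that by (simp add: prepend_def)
  show "prepend n k \<tau> i \<in> {1..n+1}" if "i \<in> {1..n+1}" for i
  proof (cases "i = 1")
    case False
    then have "i - 1 \<in> {1..n}" using that by auto
    then have "\<tau> (i - 1) \<in> {1..n}" by (rule im)
    then show ?thesis using that False by (auto simp: prepend_def shift_up_def)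
  qed (use k in \<open>simp add: prepend_def\<close>)
  show "inj_on (prepend n k \<tau>) {1..n+1}"
  proof (rule inj_onI)
    fix x y assume x: "x \<in> {1..n+1}" and y: "y \<in> {1..n+1}"
      and eq: "prepend n k \<tau> x = prepend n k \<tau> y"
    have skip: "shift_up k v \<noteq> k" for v by (simp add: shift_up_def)
    have first: "prepend n k \<tau> 1 = k" by (simp add: prepend_def)
    consider "x = 1" "y = 1" | "x \<noteq> 1" "y \<noteq> 1" | "x = 1 \<longleftrightarrow> y \<noteq> 1" by blast
    then show "x = y"
    proof cases
      case 2
      then have "shift_up k (\<tau> (x - 1)) = shift_up k (\<tau> (y - 1))"
        using eq val x y by auto
      then have "\<tau> (x - 1) = \<tau> (y - 1)" by (auto simp: shift_up_def split: if_split_asm)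
      then show ?thesis using inj_onD[OF inj] x y 2 by force
    next
      case 3
      then show ?thesis using eq first skip val x y by (cases "x = 1") auto
    qed simp
  qed
qed (auto simp: prepend_def)

lemma remove_first_permutes:
  assumes \<sigma>: "\<sigma> permutes {1..n+1}" and first: "\<sigma> 1 = k"
  shows "remove_first n k \<sigma> permutes {1..n}"
proof (rule inj_imp_permutes)
  have im: "i \<in> {1..n+1} \<Longrightarrow> \<sigma> i \<in> {1..n+1}" for i using permutes_in_image[OF \<sigma>] by blast
  have inj: "inj_on \<sigma> {1..n+1}" using \<sigma> permutes_inj_on by blast
  have rest: "\<sigma> (Suc i) \<in> {1..n+1} - {k}" if "i \<in> {1..n}" for i
    using im[of "Suc i"] inj_onD[OF inj, of "Suc i" 1] that first by auto
  have k: "k \<in> {1..n+1}" using im[of 1] first by simp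
  show "remove_first n k \<sigma> i \<in> {1..n}" if "i \<in> {1..n}" for i
    using rest[OF that] that k by (auto simp: remove_first_def shift_down_def)
  show "inj_on (remove_first n k \<sigma>) {1..n}"
  proof (rule inj_onI)
    fix x y assume x: "x \<in> {1..n}" and y: "y \<in> {1..n}"
      and eq: "remove_first n k \<sigma> x = remove_first n k \<sigma> y"
    have "shift_down k (\<sigma> (Suc x)) = shift_down k (\<sigma> (Suc y))"
      using eq x y by (simp add: remove_first_def)
    then have "\<sigma> (Suc x) = \<sigma> (Suc y)"
      using rest[OF x] rest[OF y] by (auto simp: shift_down_def split: if_split_asm)
    then show "x = y" using inj_onD[OF inj, of "Suc x" "Suc y"] x y by auto
  qed
qed (auto simp: remove_first_def)

lemma remove_first_prepend:
  assumes "\<tau> permutes {1..n}"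
  shows "remove_first n k (prepend n k \<tau>) = \<tau>"
proof
  fix i show "remove_first n k (prepend n k \<tau>) i = \<tau> i"
    using permutes_not_in[OF assms, of i]
    by (auto simp: remove_first_def prepend_def shift_down_def shift_up_def)
qed

lemma prepend_remove_first:
  assumes \<sigma>: "\<sigma> permutes {1..n+1}" and first: "\<sigma> 1 = k"
  shows "prepend n k (remove_first n k \<sigma>) = \<sigma>"
proof
  fix i
  have inj: "inj_on \<sigma> {1..n+1}" using \<sigma> permutes_inj_on by blast
  consider "i = 1" | "i \<in> {2..n+1}" | "i \<notin> {1..n+1}" by fastforce
  then show "prepend n k (remove_first n k \<sigma>) i = \<sigma> i"
  proof cases
    case 2
    then have "\<sigma> i \<noteq> k" using inj_onD[OF inj, of i 1] first by auto
    then show ?thesis using 2 by (auto simp: prepend_def remove_first_def shift_down_def shift_up_def)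
  qed (use first permutes_not_in[OF \<sigma>] in \<open>auto simp: prepend_def remove_first_def\<close>)
qed

lemma descents_subset: "descents n \<sigma> \<subseteq> {1..n-1}"
  by (auto simp: descents_def)

lemma finite_descents: "finite (descents n \<sigma>)"
  using descents_subset finite_subset by blast

lemma des_le: "des n \<sigma> \<le> n - 1"
  unfolding des_def using card_mono[OF finite_atLeastAtMost descents_subset] by simp

lemma descents_prepend:
  assumes "1 \<le> n"
  shows "descents (n+1) (prepend n k \<tau>) = (if \<tau> 1 < k then {1} else {}) \<union> Suc ` descents n \<tau>"
proof (rule set_eqI)
  fix i
  have mono: "shift_up k a < shift_up k b \<longleftrightarrow> a < b" for a b by (auto simp: shift_up_def)
  have below: "shift_up k v < k \<longleftrightarrow> v < k" for v by (auto simp: shift_up_def)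
  consider "i = 0" | "i = 1" | j where "i = Suc j" "1 \<le> j"
    by (metis One_nat_def Suc_leI neq0_conv not0_implies_Suc)
  then show "i \<in> descents (n+1) (prepend n k \<tau>) \<longleftrightarrow>
             i \<in> (if \<tau> 1 < k then {1} else {}) \<union> Suc ` descents n \<tau>"
  proof cases
    case 2
    have "prepend n k \<tau> 1 = k" "prepend n k \<tau> (Suc 1) = shift_up k (\<tau> 1)"
      using assms by (auto simp: prepend_def)
    moreover have "1 \<notin> Suc ` descents n \<tau>" using descents_subset by force
    ultimately show ?thesis using 2 assms below by (auto simp: descents_def)
  next
    case (3 j)
    have "prepend n k \<tau> i = shift_up k (\<tau> j) \<and> prepend n k \<tau> (Suc i) = shift_up k (\<tau> (Suc j))"
      if "i \<le> n" using that 3 by (auto simp: prepend_def)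
    then have "i \<in> descents (n+1) (prepend n k \<tau>) \<longleftrightarrow> j \<in> descents n \<tau>"
      using 3 mono by (auto simp: descents_def)
    then show ?thesis using 3 by auto
  qed (auto simp: descents_def)
qed

lemma des_prepend:
  assumes "1 \<le> n"
  shows "des (n+1) (prepend n k \<tau>) = des n \<tau> + (if \<tau> 1 < k then 1 else 0)"
proof -
  have "1 \<notin> Suc ` descents n \<tau>" using descents_subset by force
  then have "card ((if \<tau> 1 < k then {1} else {}) \<union> Suc ` descents n \<tau>)
      = card (if \<tau> 1 < k then {1::nat} else {}) + card (Suc ` descents n \<tau>)"
    by (intro card_Un_disjoint) (auto simp: finite_descents)
  moreover have "card (Suc ` descents n \<tau>) = des n \<tau>"
    unfolding des_def by (rule card_image) simp
  ultimately show ?thesis unfolding des_def[of "n+1"] descents_prepend[OF assms] by simp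
qed

section \<open>The first-letter recurrence\<close>

lemma A_as_card_prepend:
  assumes n: "1 \<le> n" and k: "1 \<le> k" "k \<le> n + 1"
  shows "A (n+1) m k = card {\<tau>. \<tau> permutes {1..n} \<and> des n \<tau> + (if \<tau> 1 < k then 1 else 0) = m}"
    (is "_ = card ?B")
proof -
  let ?S = "{\<sigma>. \<sigma> permutes {1..n+1} \<and> des (n+1) \<sigma> = m \<and> \<sigma> 1 = k}"
  have "bij_betw (prepend n k) ?B ?S"
  proof (rule bij_betw_byWitness[where f'="remove_first n k"])
    show "\<forall>\<tau>\<in>?B. remove_first n k (prepend n k \<tau>) = \<tau>"
      using remove_first_prepend by blast
    show "\<forall>\<sigma>\<in>?S. prepend n k (remove_first n k \<sigma>) = \<sigma>"
      using prepend_remove_first by blast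
    show "prepend n k ` ?B \<subseteq> ?S"
      using prepend_permutes k des_prepend[OF n] by (auto simp: prepend_def)
    show "remove_first n k ` ?S \<subseteq> ?B"
    proof
      fix \<tau> assume "\<tau> \<in> remove_first n k ` ?S"
      then obtain \<sigma> where \<sigma>: "\<sigma> \<in> ?S" and \<tau>: "\<tau> = remove_first n k \<sigma>" by blast
      then have "\<tau> permutes {1..n}" using remove_first_permutes by blast
      moreover have "des (n+1) (prepend n k \<tau>) = m" using \<sigma> \<tau> prepend_remove_first by simp
      ultimately show "\<tau> \<in> ?B" using des_prepend[OF n] by simp
    qed
  qed
  then show ?thesis unfolding A_def by (simp add: bij_betw_same_card)
qed

text \<open>Sorting the permutations of {1..n} by their first letter k' gives the recurrence: those with
  k' < k come from descent row m-1, the others from row m.\<close>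

lemma A_rec:
  assumes n: "1 \<le> n" and k: "1 \<le> k" "k \<le> n + 1"
  shows "A (n+1) m k = (\<Sum>k'\<in>{1..<k}. if m = 0 then 0 else A n (m-1) k') + (\<Sum>k'\<in>{k..n}. A n m k')"
proof -
  let ?C = "\<lambda>k'. {\<tau>. \<tau> permutes {1..n} \<and> des n \<tau> + (if k' < k then 1 else 0) = m \<and> \<tau> 1 = k'}"
  have first_in: "\<tau> 1 \<in> {1..n}" if "\<tau> permutes {1..n}" for \<tau>
    using n permutes_in_image[OF that] by simp
  have "A (n+1) m k = card (\<Union>k'\<in>{1..n}. ?C k')"
    unfolding A_as_card_prepend[OF assms] using first_in by (intro arg_cong[where f=card]) auto
  also have "\<dots> = (\<Sum>k'\<in>{1..n}. card (?C k'))"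
    by (rule card_UN_disjoint) (auto simp: finite_permutations)
  also have "\<dots> = (\<Sum>k'\<in>{1..n}. if k' < k then (if m = 0 then 0 else A n (m-1) k') else A n m k')"
  proof (rule sum.cong[OF refl])
    fix k'
    have "m \<noteq> 0 \<Longrightarrow> ?C k' = {\<tau>. \<tau> permutes {1..n} \<and> des n \<tau> = m - 1 \<and> \<tau> 1 = k'}" if "k' < k"
      using that by auto
    then show "card (?C k') = (if k' < k then (if m = 0 then 0 else A n (m-1) k') else A n m k')"
      by (auto simp: A_def)
  qed
  also have "\<dots> = (\<Sum>k'\<in>{1..<k}. if m = 0 then 0 else A n (m-1) k') + (\<Sum>k'\<in>{k..n}. A n m k')"
    by (subst sum_split_at[OF k]) simp
  finally show ?thesis .
qed

lemma A_step:
  assumes n: "1 \<le> n" and k: "1 \<le> k" "k \<le> n"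
  shows "A (n+1) m (k+1) + A n m k = A (n+1) m k + (if m = 0 then 0 else A n (m-1) k)"
proof -
  have "(\<Sum>k'\<in>{1..<Suc k}. if m = 0 then 0 else A n (m-1) k')
      = (\<Sum>k'\<in>{1..<k}. if m = 0 then 0 else A n (m-1) k') + (if m = 0 then 0 else A n (m-1) k)"
    using k by (simp add: sum.atLeastLessThan_Suc)
  moreover have "(\<Sum>k'\<in>{k..n}. A n m k') = A n m k + (\<Sum>k'\<in>{Suc k..n}. A n m k')"
    using k by (simp add: sum.atLeast_Suc_atMost)
  ultimately show ?thesis using A_rec[OF n, of k m] A_rec[OF n, of "k+1" m] k by simp
qed

text \<open>Part (iv): both sides count all permutations of {1..n} with m descents.\<close>

lemma A_first_last:
  assumes n: "1 \<le> n"
  shows "A (n+1) m 1 = A (n+1) (m+1) (n+1)"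
  using A_rec[OF n, of 1 m] A_rec[OF n, of "n+1" "m+1"] n
  by (simp add: atLeastLessThanSuc_atLeastAtMost)

section \<open>Complement symmetry\<close>

definition complement :: "nat \<Rightarrow> (nat \<Rightarrow> nat) \<Rightarrow> nat \<Rightarrow> nat" where
  "complement n \<sigma> = (\<lambda>i. if i \<in> {1..n} then Suc n - \<sigma> i else i)"

lemma complement_permutes:
  assumes \<sigma>: "\<sigma> permutes {1..n}"
  shows "complement n \<sigma> permutes {1..n}"
proof (rule inj_imp_permutes)
  have im: "i \<in> {1..n} \<Longrightarrow> \<sigma> i \<in> {1..n}" for i using permutes_in_image[OF \<sigma>] by blast
  show "complement n \<sigma> i \<in> {1..n}" if "i \<in> {1..n}" for i
    using im[OF that] that by (auto simp: complement_def)
  show "inj_on (complement n \<sigma>) {1..n}"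
  proof (rule inj_onI)
    fix x y assume x: "x \<in> {1..n}" and y: "y \<in> {1..n}"
      and "complement n \<sigma> x = complement n \<sigma> y"
    then have "\<sigma> x = \<sigma> y" using im[OF x] im[OF y] by (auto simp: complement_def)
    then show "x = y" using inj_onD[OF permutes_inj_on[OF \<sigma>]] x y by blast
  qed
qed (auto simp: complement_def)

lemma complement_complement:
  assumes \<sigma>: "\<sigma> permutes {1..n}"
  shows "complement n (complement n \<sigma>) = \<sigma>"
proof
  fix i
  have "i \<in> {1..n} \<Longrightarrow> \<sigma> i \<in> {1..n}" using permutes_in_image[OF \<sigma>] by blast
  then show "complement n (complement n \<sigma>) i = \<sigma> i"
    using permutes_not_in[OF \<sigma>, of i] by (auto simp: complement_def)
qed

lemma des_complement:
  assumes \<sigma>: "\<sigma> permutes {1..n}"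
  shows "des n (complement n \<sigma>) = n - 1 - des n \<sigma>"
proof -
  have im: "i \<in> {1..n} \<Longrightarrow> \<sigma> i \<in> {1..n}" for i using permutes_in_image[OF \<sigma>] by blast
  have "descents n (complement n \<sigma>) = {1..n-1} - descents n \<sigma>"
  proof (rule set_eqI)
    fix i
    show "i \<in> descents n (complement n \<sigma>) \<longleftrightarrow> i \<in> {1..n-1} - descents n \<sigma>"
    proof (cases "i \<in> {1..n-1}")
      case True
      then have ii: "i \<in> {1..n}" "Suc i \<in> {1..n}" by auto
      have "\<sigma> i \<noteq> \<sigma> (Suc i)" using inj_onD[OF permutes_inj_on[OF \<sigma>] _ ii] by auto
      moreover have "\<sigma> i \<in> {1..n}" "\<sigma> (Suc i) \<in> {1..n}" using im ii by auto
      ultimately have "Suc n - \<sigma> (Suc i) < Suc n - \<sigma> i \<longleftrightarrow> \<not> \<sigma> (Suc i) < \<sigma> i"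
        by auto
      then show ?thesis using True ii by (auto simp: descents_def complement_def)
    qed (auto simp: descents_def)
  qed
  then show ?thesis
    unfolding des_def using card_Diff_subset[OF finite_descents descents_subset] by simp
qed

lemma A_complement:
  assumes "m \<le> n - 1" "1 \<le> k" "k \<le> n"
  shows "A n m k = A n (n - 1 - m) (Suc n - k)"
proof -
  let ?S = "\<lambda>m k. {\<sigma>. \<sigma> permutes {1..n} \<and> des n \<sigma> = m \<and> \<sigma> 1 = k}"
  have maps: "complement n ` ?S m k \<subseteq> ?S (n - 1 - m) (Suc n - k)"
    if "m \<le> n - 1" "1 \<le> k" "k \<le> n" for m k
  proof
    fix \<rho> assume "\<rho> \<in> complement n ` ?S m k"
    then obtain \<sigma> where \<sigma>: "\<sigma> permutes {1..n}" "des n \<sigma> = m" "\<sigma> 1 = k"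
      and \<rho>: "\<rho> = complement n \<sigma>" by blast
    have "\<rho> 1 = Suc n - k" using \<sigma>(3) \<rho> that by (simp add: complement_def)
    then show "\<rho> \<in> ?S (n - 1 - m) (Suc n - k)"
      using complement_permutes[OF \<sigma>(1)] des_complement[OF \<sigma>(1)] \<sigma>(2) \<rho> by simp
  qed
  have "bij_betw (complement n) (?S m k) (?S (n - 1 - m) (Suc n - k))"
  proof (rule bij_betw_byWitness[where f'="complement n"])
    show "complement n ` ?S (n - 1 - m) (Suc n - k) \<subseteq> ?S m k"
      using maps[of "n - 1 - m" "Suc n - k"] assms by auto
  qed (use complement_complement maps assms in auto)
  then show ?thesis unfolding A_def by (rule bij_betw_same_card)
qed

lemma A_row_sum_symmetric:
  assumes "m \<le> n - 1"
  shows "(\<Sum>k\<in>{1..n}. A n m k) = (\<Sum>k\<in>{1..n}. A n (n - 1 - m) k)"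
proof -
  have "(\<Sum>k\<in>{1..n}. A n m k) = (\<Sum>k\<in>{1..n}. A n (n - 1 - m) (n + 1 - k))"
    by (rule sum.cong[OF refl]) (use A_complement assms in auto)
  also have "\<dots> = (\<Sum>k\<in>{1..n}. A n (n - 1 - m) k)"
    using sum.atLeastAtMost_rev[of "A n (n - 1 - m)" 1 n] by simp
  finally show ?thesis .
qed

section \<open>Comparing neighbouring descent rows\<close>

lemma A_too_many_descents:
  assumes "n - 1 < m"
  shows "A n m k = 0"
proof -
  have "{\<sigma>. \<sigma> permutes {1..n} \<and> des n \<sigma> = m \<and> \<sigma> 1 = k} = {}"
    using des_le[of n] assms by (auto simp: not_less[symmetric])
  then show ?thesis unfolding A_def by (metis card.empty)
qed

text \<open>For n = 2m, the middle-row inequality on initial segments of first letters extends to all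
  initial segments: beyond m+1 the two rows have equal totals and the tails compare the other way
  by complement symmetry.\<close>

lemma prefix_sums_middle_rows:
  assumes d: "d = 2 * m" "1 \<le> m" and k: "1 \<le> k" "k \<le> d + 1"
    and middle: "\<And>k. 1 \<le> k \<Longrightarrow> k \<le> m \<Longrightarrow> A d m k \<le> A d (m - 1) k"
  shows "(\<Sum>k'\<in>{1..<k}. A d m k') \<le> (\<Sum>k'\<in>{1..<k}. A d (m - 1) k')"
proof (cases "k \<le> m + 1")
  case True
  then show ?thesis by (intro sum_mono middle) auto
next
  case False
  have total: "(\<Sum>k'\<in>{1..d}. A d m k') = (\<Sum>k'\<in>{1..d}. A d (m - 1) k')"
    using A_row_sum_symmetric[of "m - 1" d] d by simp
  have tail: "(\<Sum>k'\<in>{k..d}. A d (m - 1) k') \<le> (\<Sum>k'\<in>{k..d}. A d m k')"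
  proof (rule sum_mono)
    fix k' assume k': "k' \<in> {k..d}"
    have "A d (m - 1) k' = A d m (Suc d - k')" "A d m k' = A d (m - 1) (Suc d - k')"
      using A_complement[of "m - 1" d k'] A_complement[of m d k'] k' k d by auto
    moreover have "1 \<le> Suc d - k'" "Suc d - k' \<le> m" using k' False d by auto
    ultimately show "A d (m - 1) k' \<le> A d m k'" using middle[of "Suc d - k'"] k' by simp
  qed
  show ?thesis
    using total tail sum_split_at[OF k, of "A d m"] sum_split_at[OF k, of "A d (m - 1)"] by linarith
qed

lemma upper_rows_step:
  assumes d: "1 \<le> d" and m: "d \<le> 2 * m" and k: "1 \<le> k" "k \<le> d + 1"
    and upper: "\<And>m k. d - 1 \<le> 2 * m \<Longrightarrow> 1 \<le> k \<Longrightarrow> k \<le> d \<Longrightarrow> A d (m+1) k \<le> A d m k"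
    and middle: "\<And>k. even d \<Longrightarrow> 1 \<le> k \<Longrightarrow> k \<le> d div 2 \<Longrightarrow>
                   A d (d div 2) k \<le> A d (d div 2 - 1) k"
  shows "A (d+1) (m+1) k \<le> A (d+1) m k"
proof -
  have m1: "1 \<le> m" using d m by auto
  have tail: "(\<Sum>k'\<in>{k..d}. A d (m+1) k') \<le> (\<Sum>k'\<in>{k..d}. A d m k')"
    by (intro sum_mono upper) (use m k in auto)
  have prefix: "(\<Sum>k'\<in>{1..<k}. A d m k') \<le> (\<Sum>k'\<in>{1..<k}. A d (m - 1) k')"
  proof (cases "d + 1 \<le> 2 * m")
    case True
    show ?thesis by (intro sum_mono) (use upper[of "m - 1"] True m1 k in auto)
  next
    case False
    then have "d = 2 * m" using m by auto
    then show ?thesis by (intro prefix_sums_middle_rows[OF _ m1 k]) (use middle in auto)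
  qed
  show ?thesis using A_rec[OF d k, of "m+1"] A_rec[OF d k, of m] m1 tail prefix by simp
qed

text \<open>Induction step for the middle rows: for odd d = 2m+1, rows m+1 and m of the next size
  compare on first letters up to m+1.  The parts of the recurrence coming from first letters
  below k are reflected by complement symmetry onto the final segment J of first letters; after
  cancelling the sums over J, only the comparison of rows m+1 and m on the middle segment K
  remains.\<close>

lemma middle_rows_step:
  assumes d: "d = 2 * m + 1" and k: "1 \<le> k" "k \<le> m + 1"
    and upper: "\<And>k. 1 \<le> k \<Longrightarrow> k \<le> d \<Longrightarrow> A d (m+1) k \<le> A d m k"
  shows "A (d+1) (m+1) k \<le> A (d+1) m k"
proof -
  have d1: "1 \<le> d" and kd: "k \<le> d + 1" using d k by auto
  define J where "J = {Suc (Suc d) - k..d}"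
  define K where "K = {k..<Suc (Suc d) - k}"
  have tail: "(\<Sum>j\<in>{k..d}. f j) = (\<Sum>j\<in>K. f j) + (\<Sum>j\<in>J. f j)" for f :: "nat \<Rightarrow> nat"
    unfolding J_def K_def by (rule sum_split_at) (use d k in auto)
  have reflect: "(\<Sum>k'\<in>{1..<k}. A d m' k') = (\<Sum>j\<in>J. A d (d - 1 - m') j)"
    if "m' \<le> d - 1" for m'
  proof -
    have "(\<Sum>k'\<in>{1..<k}. A d m' k') = (\<Sum>k'\<in>{1..<k}. A d (d - 1 - m') (Suc d - k'))"
      by (intro sum.cong refl A_complement) (use that k d in auto)
    then show ?thesis unfolding J_def using sum_prefix_reflect[OF k(1) kd] by simp
  qed
  have core: "(\<Sum>j\<in>K. A d (m+1) j) \<le> (\<Sum>j\<in>K. A d m j)"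
    by (intro sum_mono upper) (use k in \<open>auto simp: K_def d\<close>)
  show ?thesis
  proof (cases "m = 0")
    case True
    then show ?thesis using A_rec[OF d1 k(1) kd, of 1] A_rec[OF d1 k(1) kd, of 0] core tail k
      by (simp add: K_def J_def d)
  next
    case False
    have "d - 1 - m = m" "d - 1 - (m - 1) = m + 1" using d False by auto
    then show ?thesis
      using A_rec[OF d1 k(1) kd, of "m+1"] A_rec[OF d1 k(1) kd, of m] reflect[of m] reflect[of "m - 1"]
        core tail[of "A d m"] tail[of "A d (m+1)"] False d by simp
  qed
qed

lemma descent_rows_decreasing:
  assumes "1 \<le> n"
  shows "(\<forall>m k. n - 1 \<le> 2 * m \<longrightarrow> 1 \<le> k \<longrightarrow> k \<le> n \<longrightarrow> A n (m+1) k \<le> A n m k) \<and>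
         (even n \<longrightarrow> (\<forall>k. 1 \<le> k \<longrightarrow> k \<le> n div 2 \<longrightarrow> A n (n div 2) k \<le> A n (n div 2 - 1) k))"
  using assms
proof (induction n rule: nat_induct_at_least)
  case base
  show ?case using A_too_many_descents[of 1] by simp
next
  case (Suc d)
  have upper: "\<And>m k. d - 1 \<le> 2 * m \<Longrightarrow> 1 \<le> k \<Longrightarrow> k \<le> d \<Longrightarrow> A d (m+1) k \<le> A d m k"
    and middle: "\<And>k. even d \<Longrightarrow> 1 \<le> k \<Longrightarrow> k \<le> d div 2 \<Longrightarrow> A d (d div 2) k \<le> A d (d div 2 - 1) k"
    using Suc.IH by blast+
  have "A (d+1) (d div 2 + 1) k \<le> A (d+1) (d div 2) k"
    if "odd d" "1 \<le> k" "k \<le> d div 2 + 1" for k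
    using that by (intro middle_rows_step upper) auto
  moreover have "(d + 1) div 2 = d div 2 + 1" "(d + 1) div 2 - 1 = d div 2" if "odd d"
    using that by presburger+
  ultimately show ?case
    using upper_rows_step[OF Suc.hyps _ _ _ upper middle] by auto
qed

lemma upper_rows_decreasing:
  assumes "1 \<le> n" "n - 1 \<le> 2 * m" "1 \<le> k" "k \<le> n"
  shows "A n (m+1) k \<le> A n m k"
  using descent_rows_decreasing assms by blast

lemma middle_row_dominated:
  assumes "1 \<le> n" "even n" "1 \<le> k" "k \<le> n div 2"
  shows "A n (n div 2) k \<le> A n (n div 2 - 1) k"
  using descent_rows_decreasing assms by blast

text \<open>The mirror images of the two inequalities under complement symmetry.\<close>

lemma lower_rows_increasing:
  assumes "2 * m + 3 \<le> n" "1 \<le> k" "k \<le> n"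
  shows "A n m k \<le> A n (m+1) k"
proof -
  have "A n (n - 2 - m + 1) (Suc n - k) \<le> A n (n - 2 - m) (Suc n - k)"
    by (rule upper_rows_decreasing) (use assms in auto)
  moreover have "n - 2 - m + 1 = n - 1 - m" "n - 2 - m = n - 1 - (m + 1)" using assms by auto
  ultimately show ?thesis using A_complement[of m n k] A_complement[of "m+1" n k] assms by simp
qed

lemma middle_row_dominating:
  assumes "even n" "n div 2 + 1 \<le> k" "k \<le> n"
  shows "A n (n div 2 - 1) k \<le> A n (n div 2) k"
proof -
  have "A n (n div 2) (Suc n - k) \<le> A n (n div 2 - 1) (Suc n - k)"
    by (rule middle_row_dominated) (use assms in auto)
  moreover have "A n (n div 2 - 1) k = A n (n div 2) (Suc n - k)"
    using A_complement[of "n div 2 - 1" n k] assms by auto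
  moreover have "A n (n div 2) k = A n (n div 2 - 1) (Suc n - k)"
    using A_complement[of "n div 2" n k] assms by auto
  ultimately show ?thesis by simp
qed

lemma first_letter_increasing:
  assumes "1 \<le> n" "1 \<le> m" "1 \<le> k" "k \<le> n" "A n m k \<le> A n (m - 1) k"
  shows "A (n+1) m k \<le> A (n+1) m (k+1)"
  using A_step[of n k m] assms by simp

lemma first_letter_decreasing:
  assumes "1 \<le> n" "1 \<le> k" "k \<le> n" "1 \<le> m \<Longrightarrow> A n (m - 1) k \<le> A n m k"
  shows "A (n+1) m (k+1) \<le> A (n+1) m k"
  using A_step[of n k m] assms by (cases "m = 0") simp_all

theorem corollary4p9:
  fixes d :: nat
  assumes "d \<ge> 1"
  shows "(\<forall>j. (d + 1 + 1) div 2 \<le> j \<and> j \<le> d \<longrightarrow>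
            (\<forall>k. 1 \<le> k \<and> k \<le> d \<longrightarrow> A (d+1) j k \<le> A (d+1) j (k+1)))
    \<and> (\<forall>j. j \<le> (d - 1) div 2 \<longrightarrow>
            (\<forall>k. 1 \<le> k \<and> k \<le> d \<longrightarrow> A (d+1) j k \<ge> A (d+1) j (k+1)))
    \<and> (even d \<longrightarrow>
            (\<forall>k. 1 \<le> k \<and> k \<le> d div 2 \<longrightarrow> A (d+1) (d div 2) k \<le> A (d+1) (d div 2) (k+1)) \<and>
            (\<forall>k. d div 2 + 1 \<le> k \<and> k \<le> d \<longrightarrow> A (d+1) (d div 2) k \<ge> A (d+1) (d div 2) (k+1)))
    \<and> (\<forall>j. j \<le> d - 1 \<longrightarrow> A (d+1) j 1 = A (d+1) (j+1) (d+1))"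
proof (intro conjI allI impI)
  fix j k assume "(d + 1 + 1) div 2 \<le> j \<and> j \<le> d" "1 \<le> k \<and> k \<le> d"
  then show "A (d+1) j k \<le> A (d+1) j (k+1)"
    using upper_rows_decreasing[of d "j - 1" k] assms by (intro first_letter_increasing) auto
next
  fix j k assume "j \<le> (d - 1) div 2" "1 \<le> k \<and> k \<le> d"
  then show "A (d+1) j (k+1) \<le> A (d+1) j k"
    using lower_rows_increasing[of "j - 1" d k] assms by (intro first_letter_decreasing) auto
next
  fix k assume "even d" "1 \<le> k \<and> k \<le> d div 2"
  then show "A (d+1) (d div 2) k \<le> A (d+1) (d div 2) (k+1)"
    using middle_row_dominated[of d k] assms by (intro first_letter_increasing) auto
next
  fix k assume "even d" "d div 2 + 1 \<le> k \<and> k \<le> d"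
  then show "A (d+1) (d div 2) (k+1) \<le> A (d+1) (d div 2) k"
    using middle_row_dominating[of d k] assms by (intro first_letter_decreasing) auto
next
  fix j show "A (d+1) j 1 = A (d+1) (j+1) (d+1)" using A_first_last assms by blast
qed

end
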